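(* Let $G$ be a group and $\iota\in G$ an element for which there is a finite normal subgroup $L\lhd G$ such that the image of $\iota$ is central in $G/L$. Let $A$ and $B$ be $\mathbb{Q}[G]$-modules with $A$ gr-odd. If $B$ is gr-odd (resp. gr-even), then both $A\otimes_{\mathbb{Q}}B$ and $\mathrm{Hom}_{\mathbb{Q}}(A,B)$ are gr-even (resp. gr-odd). The analogous statement with $A$ gr-even also holds (i.e. if $A$ is gr-even, then $A\otimes_{\mathbb{Q}}B$ and $\mathrm{Hom}_{\mathbb{Q}}(A,B)$ are gr-odd if $B$ is gr-odd and gr-even if $B$ is gr-even).
   Context: $A\otimes_{\mathbb{Q}}B$ carries the diagonal $G$-action and $\mathrm{Hom}_{\mathbb{Q}}(A,B)$ the conjugation action. A $\mathbb{Q}[G]$-module $M$ is odd if $\iota\cdot m=-m$ for all $m$, even if $\iota\cdot m=m$ for all $m$; it is gr-odd (resp. gr-even) if it has a finite filtration by $\mathbb{Q}[G]$-submodules $0=F_{-1}M\subseteq\cdots\subseteq F_kM=M$ with all quotients $F_{i+1}M/F_iM$ odd (resp. even). *)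

theory Defs
  imports "HOL-Algebra.Algebra" "HOL-Library.Function_Algebras"
begin

definition QG_module :: "'g monoid \<Rightarrow> (rat \<Rightarrow> 'v::ab_group_add \<Rightarrow> 'v) \<Rightarrow> ('g \<Rightarrow> 'v \<Rightarrow> 'v) \<Rightarrow> bool" where
  "QG_module G s act \<longleftrightarrow>
     Vector_Spaces.vector_space s \<and>
     (\<forall>g\<in>carrier G. Vector_Spaces.linear s s (act g)) \<and>
     act \<one>\<^bsub>G\<^esub> = id \<and>
     (\<forall>g\<in>carrier G. \<forall>h\<in>carrier G. act (g \<otimes>\<^bsub>G\<^esub> h) = act g \<circ> act h)"

definition QG_submodule ::
  "'g monoid \<Rightarrow> 'v set \<Rightarrow> ('v \<Rightarrow> 'v \<Rightarrow> 'v) \<Rightarrow> 'v \<Rightarrow> (rat \<Rightarrow> 'v \<Rightarrow> 'v) \<Rightarrow> ('g \<Rightarrow> 'v \<Rightarrow> 'v) \<Rightarrow> 'v set \<Rightarrow> bool" where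
  "QG_submodule G V pl nul scale act W \<longleftrightarrow>
     W \<subseteq> V \<and> nul \<in> W \<and>
     (\<forall>x\<in>W. \<forall>y\<in>W. pl x y \<in> W) \<and>
     (\<forall>c. \<forall>x\<in>W. scale c x \<in> W) \<and>
     (\<forall>g\<in>carrier G. \<forall>x\<in>W. act g x \<in> W)"

text \<open>The filtration 0 = F_{-1} <= F_0 <= ... <= F_k = M of the paper
  is indexed here as F 0 = 0, F (j+1) = F_j. The quotient F(i+1)/F(i) is odd iff
  iota.m + m lies in F i for every m in F(i+1), and even iff iota.m - m lies in F i.\<close>
definition gr_odd ::
  "'g monoid \<Rightarrow> 'g \<Rightarrow> 'v set \<Rightarrow> ('v \<Rightarrow> 'v \<Rightarrow> 'v) \<Rightarrow> 'v \<Rightarrow> (rat \<Rightarrow> 'v \<Rightarrow> 'v) \<Rightarrow> ('g \<Rightarrow> 'v \<Rightarrow> 'v) \<Rightarrow> bool" where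
  "gr_odd G \<iota> V pl nul scale act \<longleftrightarrow>
     (\<exists>F :: nat \<Rightarrow> 'v set. \<exists>k.
        (\<forall>i\<le>k. QG_submodule G V pl nul scale act (F i)) \<and>
        F 0 = {nul} \<and> F k = V \<and>
        (\<forall>i<k. F i \<subseteq> F (Suc i) \<and>
               (\<forall>m\<in>F (Suc i). pl (act \<iota> m) m \<in> F i)))"

definition gr_even ::
  "'g monoid \<Rightarrow> 'g \<Rightarrow> 'v set \<Rightarrow> ('v \<Rightarrow> 'v \<Rightarrow> 'v) \<Rightarrow> 'v \<Rightarrow> (rat \<Rightarrow> 'v \<Rightarrow> 'v) \<Rightarrow> ('g \<Rightarrow> 'v \<Rightarrow> 'v) \<Rightarrow> bool" where
  "gr_even G \<iota> V pl nul scale act \<longleftrightarrow>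
     (\<exists>F :: nat \<Rightarrow> 'v set. \<exists>k.
        (\<forall>i\<le>k. QG_submodule G V pl nul scale act (F i)) \<and>
        F 0 = {nul} \<and> F k = V \<and>
        (\<forall>i<k. F i \<subseteq> F (Suc i) \<and>
               (\<forall>m\<in>F (Suc i). pl (act \<iota> m) (scale (-1) m) \<in> F i)))"

definition free_space :: "('a \<times> 'b \<Rightarrow> rat) set" where
  "free_space = {f. finite {p. f p \<noteq> 0}}"

definition fdelta :: "'a \<times> 'b \<Rightarrow> ('a \<times> 'b \<Rightarrow> rat)" where
  "fdelta p = (\<lambda>q. if q = p then 1 else 0)"

definition fscale :: "rat \<Rightarrow> ('x \<Rightarrow> rat) \<Rightarrow> ('x \<Rightarrow> rat)" where
  "fscale c f = (\<lambda>q. c * f q)"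

definition tensor_rels :: "(rat \<Rightarrow> 'a::ab_group_add \<Rightarrow> 'a) \<Rightarrow> (rat \<Rightarrow> 'b::ab_group_add \<Rightarrow> 'b) \<Rightarrow> ('a \<times> 'b \<Rightarrow> rat) set" where
  "tensor_rels sA sB =
     {fdelta (a + a', b) - fdelta (a, b) - fdelta (a', b) | a a' b. True} \<union>
     {fdelta (a, b + b') - fdelta (a, b) - fdelta (a, b') | a b b'. True} \<union>
     {fdelta (sA c a, b) - fscale c (fdelta (a, b)) | c a b. True} \<union>
     {fdelta (a, sB c b) - fscale c (fdelta (a, b)) | c a b. True}"

definition tensor_null :: "(rat \<Rightarrow> 'a::ab_group_add \<Rightarrow> 'a) \<Rightarrow> (rat \<Rightarrow> 'b::ab_group_add \<Rightarrow> 'b) \<Rightarrow> ('a \<times> 'b \<Rightarrow> rat) set" where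
  "tensor_null sA sB = module.span fscale (tensor_rels sA sB)"

text \<open>Elements of A (x)_Q B are the cosets f + N of the relation subspace N.\<close>
definition tensor_class :: "(rat \<Rightarrow> 'a::ab_group_add \<Rightarrow> 'a) \<Rightarrow> (rat \<Rightarrow> 'b::ab_group_add \<Rightarrow> 'b) \<Rightarrow> ('a \<times> 'b \<Rightarrow> rat) \<Rightarrow> ('a \<times> 'b \<Rightarrow> rat) set" where
  "tensor_class sA sB f = {h. h - f \<in> tensor_null sA sB}"

definition tensor_carrier :: "(rat \<Rightarrow> 'a::ab_group_add \<Rightarrow> 'a) \<Rightarrow> (rat \<Rightarrow> 'b::ab_group_add \<Rightarrow> 'b) \<Rightarrow> ('a \<times> 'b \<Rightarrow> rat) set set" where
  "tensor_carrier sA sB = tensor_class sA sB ` free_space"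

definition tensor_rep :: "('x \<Rightarrow> rat) set \<Rightarrow> ('x \<Rightarrow> rat)" where
  "tensor_rep U = (SOME f. f \<in> U)"

definition tensor_add :: "(rat \<Rightarrow> 'a::ab_group_add \<Rightarrow> 'a) \<Rightarrow> (rat \<Rightarrow> 'b::ab_group_add \<Rightarrow> 'b) \<Rightarrow> ('a \<times> 'b \<Rightarrow> rat) set \<Rightarrow> ('a \<times> 'b \<Rightarrow> rat) set \<Rightarrow> ('a \<times> 'b \<Rightarrow> rat) set" where
  "tensor_add sA sB U W2 = tensor_class sA sB (tensor_rep U + tensor_rep W2)"

definition tensor_zero :: "(rat \<Rightarrow> 'a::ab_group_add \<Rightarrow> 'a) \<Rightarrow> (rat \<Rightarrow> 'b::ab_group_add \<Rightarrow> 'b) \<Rightarrow> ('a \<times> 'b \<Rightarrow> rat) set" where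
  "tensor_zero sA sB = tensor_class sA sB 0"

definition tensor_scale :: "(rat \<Rightarrow> 'a::ab_group_add \<Rightarrow> 'a) \<Rightarrow> (rat \<Rightarrow> 'b::ab_group_add \<Rightarrow> 'b) \<Rightarrow> rat \<Rightarrow> ('a \<times> 'b \<Rightarrow> rat) set \<Rightarrow> ('a \<times> 'b \<Rightarrow> rat) set" where
  "tensor_scale sA sB c U = tensor_class sA sB (fscale c (tensor_rep U))"

text \<open>Diagonal action: g.(a (x) b) = g.a (x) g.b, i.e. on the free space
  (g.f)(a,b) = f(g^-1 a, g^-1 b), so that g.fdelta (a,b) = fdelta (g a, g b).\<close>
definition free_act :: "'g monoid \<Rightarrow> ('g \<Rightarrow> 'a \<Rightarrow> 'a) \<Rightarrow> ('g \<Rightarrow> 'b \<Rightarrow> 'b) \<Rightarrow> 'g \<Rightarrow> ('a \<times> 'b \<Rightarrow> rat) \<Rightarrow> ('a \<times> 'b \<Rightarrow> rat)" where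
  "free_act G actA actB g f = (\<lambda>(a, b). f (actA (inv\<^bsub>G\<^esub> g) a, actB (inv\<^bsub>G\<^esub> g) b))"

definition tensor_act :: "'g monoid \<Rightarrow> (rat \<Rightarrow> 'a::ab_group_add \<Rightarrow> 'a) \<Rightarrow> (rat \<Rightarrow> 'b::ab_group_add \<Rightarrow> 'b) \<Rightarrow> ('g \<Rightarrow> 'a \<Rightarrow> 'a) \<Rightarrow> ('g \<Rightarrow> 'b \<Rightarrow> 'b) \<Rightarrow> 'g \<Rightarrow> ('a \<times> 'b \<Rightarrow> rat) set \<Rightarrow> ('a \<times> 'b \<Rightarrow> rat) set" where
  "tensor_act G sA sB actA actB g U = tensor_class sA sB (free_act G actA actB g (tensor_rep U))"

definition hom_carrier :: "(rat \<Rightarrow> 'a::ab_group_add \<Rightarrow> 'a) \<Rightarrow> (rat \<Rightarrow> 'b::ab_group_add \<Rightarrow> 'b) \<Rightarrow> ('a \<Rightarrow> 'b) set" where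
  "hom_carrier sA sB = {f. Vector_Spaces.linear sA sB f}"

definition hom_add :: "('a \<Rightarrow> 'b::ab_group_add) \<Rightarrow> ('a \<Rightarrow> 'b) \<Rightarrow> ('a \<Rightarrow> 'b)" where
  "hom_add f h = (\<lambda>x. f x + h x)"

definition hom_zero :: "'a \<Rightarrow> 'b::ab_group_add" where
  "hom_zero = (\<lambda>_. 0)"

definition hom_scale :: "(rat \<Rightarrow> 'b \<Rightarrow> 'b) \<Rightarrow> rat \<Rightarrow> ('a \<Rightarrow> 'b) \<Rightarrow> ('a \<Rightarrow> 'b)" where
  "hom_scale sB c f = (\<lambda>x. sB c (f x))"

definition hom_act :: "'g monoid \<Rightarrow> ('g \<Rightarrow> 'a \<Rightarrow> 'a) \<Rightarrow> ('g \<Rightarrow> 'b \<Rightarrow> 'b) \<Rightarrow> 'g \<Rightarrow> ('a \<Rightarrow> 'b) \<Rightarrow> ('a \<Rightarrow> 'b)" where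
  "hom_act G actA actB g f = actB g \<circ> f \<circ> actA (inv\<^bsub>G\<^esub> g)"

end

theory Submission
  imports Defs
begin

text \<open>A gr-odd or gr-even module carries a filtration by \<open>\<rat>[G]\<close>-submodules on whose graded
  pieces \<open>\<iota>\<close> acts as a scalar \<open>e = \<plusminus>1\<close>. Given such filtrations \<open>F\<^sub>i\<close> of \<open>A\<close> (scalar \<open>e\<close>) and
  \<open>F\<^sub>j'\<close> of \<open>B\<close> (scalar \<open>e'\<close>), the images of \<open>F\<^sub>i \<otimes> F\<^sub>j'\<close> with \<open>i + j \<le> n\<close> filter \<open>A \<otimes> B\<close>: writing
  \<open>\<iota> a = e a + a\<^sub>1\<close> and \<open>\<iota> b = e' b + b\<^sub>1\<close> with \<open>a\<^sub>1\<close>, \<open>b\<^sub>1\<close> one step lower, bilinearity gives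
  \<open>\<iota>(a \<otimes> b) = e e' (a \<otimes> b) + (lower terms)\<close>. Likewise the maps sending each \<open>F\<^sub>i\<close> into
  \<open>F'\<^bsub>i+n-k\<^esub>\<close> filter \<open>Hom(A, B)\<close> with scalar \<open>e'/e\<close>, because \<open>\<iota>\<inverse>\<close> acts on the graded pieces
  of \<open>A\<close> as \<open>e\<inverse>\<close>.\<close>

definition gr_scalar ::
  "'g monoid \<Rightarrow> 'g \<Rightarrow> 'v set \<Rightarrow> ('v \<Rightarrow> 'v \<Rightarrow> 'v) \<Rightarrow> 'v \<Rightarrow> (rat \<Rightarrow> 'v \<Rightarrow> 'v) \<Rightarrow> ('g \<Rightarrow> 'v \<Rightarrow> 'v) \<Rightarrow> rat \<Rightarrow> bool" where
  "gr_scalar G \<iota> V pl nul scale act e \<longleftrightarrow>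
     (\<exists>F :: nat \<Rightarrow> 'v set. \<exists>k.
        (\<forall>i\<le>k. QG_submodule G V pl nul scale act (F i)) \<and>
        F 0 = {nul} \<and> F k = V \<and>
        (\<forall>i<k. F i \<subseteq> F (Suc i) \<and>
               (\<forall>m\<in>F (Suc i). pl (act \<iota> m) (scale (-e) m) \<in> F i)))"

lemma gr_even_eq_gr_scalar: "gr_even G \<iota> V pl nul scale act = gr_scalar G \<iota> V pl nul scale act 1"
  unfolding gr_even_def gr_scalar_def by simp

lemma gr_odd_eq_gr_scalar:
  assumes "\<forall>m\<in>V. scale 1 m = m"
  shows "gr_odd G \<iota> V pl nul scale act = gr_scalar G \<iota> V pl nul scale act (-1)"
proof -
  have scale_one: "scale 1 m = m"
    if "\<forall>i\<le>k. QG_submodule G V pl nul scale act (F i)" "i < k" "m \<in> F (Suc i)" for F k i m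
    using that assms unfolding QG_submodule_def by (metis Suc_leI subsetD)
  show ?thesis
    unfolding gr_odd_def gr_scalar_def
    by (intro ex_cong1 conj_cong refl all_cong1 imp_cong ball_cong) (auto simp: scale_one)
qed

lemma gr_scalarI:
  assumes "\<And>n. QG_submodule G V pl nul scale act (F n)"
    and "F 0 = {nul}" and "F k = V" and "\<And>n. F n \<subseteq> F (Suc n)"
    and "\<And>n m. m \<in> F (Suc n) \<Longrightarrow> pl (act \<iota> m) (scale (-e) m) \<in> F n"
  shows "gr_scalar G \<iota> V pl nul scale act e"
  unfolding gr_scalar_def using assms by blast

text \<open>A filtration as in \<^const>\<open>gr_scalar\<close> for a module on a whole type, extended constantly
  beyond \<open>k\<close> so that indices never need to be bounded.\<close>

locale scalar_filtration =
  fixes G :: "'g monoid" and \<iota> :: 'g and s :: "rat \<Rightarrow> 'v::ab_group_add \<Rightarrow> 'v"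
    and act :: "'g \<Rightarrow> 'v \<Rightarrow> 'v" and e :: rat and F :: "nat \<Rightarrow> 'v set" and k :: nat
  assumes submodule: "QG_submodule G UNIV (+) 0 s act (F i)"
    and bottom: "F 0 = {0}"
    and top: "k \<le> i \<Longrightarrow> F i = UNIV"
    and mono: "i \<le> j \<Longrightarrow> F i \<subseteq> F j"
    and step: "m \<in> F (Suc i) \<Longrightarrow> act \<iota> m - s e m \<in> F i"
begin

lemma zero_mem: "0 \<in> F i"
  and add_mem: "x \<in> F i \<Longrightarrow> y \<in> F i \<Longrightarrow> x + y \<in> F i"
  and scale_mem: "x \<in> F i \<Longrightarrow> s c x \<in> F i"
  and act_mem: "g \<in> carrier G \<Longrightarrow> x \<in> F i \<Longrightarrow> act g x \<in> F i"
  using submodule[of i] unfolding QG_submodule_def by auto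

end

lemma scalar_filtration_exists:
  assumes "Vector_Spaces.vector_space s" and "gr_scalar G \<iota> UNIV (+) 0 s act e"
  obtains F k where "scalar_filtration G \<iota> s act e F k"
proof -
  interpret vector_space s by fact
  obtain F k where sub: "\<forall>i\<le>k. QG_submodule G UNIV (+) 0 s act (F i)"
    and bottom: "F 0 = {0}" and top: "F k = UNIV"
    and steps: "\<forall>i<k. F i \<subseteq> F (Suc i) \<and> (\<forall>m\<in>F (Suc i). act \<iota> m + s (-e) m \<in> F i)"
    using assms(2) unfolding gr_scalar_def by iprover
  define F' where "F' i = F (min i k)" for i
  have "F' i \<subseteq> F' (Suc i)" for i
    using steps by (cases "i < k") (simp_all add: F'_def min_def)
  then have "mono F'"
    by (simp add: mono_iff_le_Suc)
  have step: "act \<iota> m - s e m \<in> F' i" if "m \<in> F' (Suc i)" for m i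
  proof (cases "i < k")
    case True
    then show ?thesis using that steps by (simp add: F'_def min_def)
  next
    case False
    then show ?thesis using top by (simp add: F'_def min_def)
  qed
  have "scalar_filtration G \<iota> s act e F' k"
  proof
    show "F' i \<subseteq> F' j" if "i \<le> j" for i j
      using \<open>mono F'\<close> that by (rule monoD)
  qed (use sub bottom top step in \<open>simp_all add: F'_def\<close>)
  then show thesis ..
qed

lemma linear_map_add: "Vector_Spaces.linear s1 s2 f \<Longrightarrow> f (x + y) = f x + f y"
  and linear_map_scale: "Vector_Spaces.linear s1 s2 f \<Longrightarrow> f (s1 c x) = s2 c (f x)"
  by (simp_all add: Vector_Spaces.linear_iff)

lemma linear_map_zero: "Vector_Spaces.linear s1 s2 f \<Longrightarrow> f 0 = 0"
  and linear_map_diff: "Vector_Spaces.linear s1 s2 f \<Longrightarrow> f (x - y) = f x - f y"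
  and linear_map_span_image:
    "Vector_Spaces.linear s1 s2 f \<Longrightarrow> module.span s2 (f ` S) = f ` module.span s1 S"
  by (metis module_hom.zero module_hom.diff module_hom.span_image module_hom_iff_linear)+

lemma QG_module_act_inv:
  assumes "group G" and "QG_module G s act" and "g \<in> carrier G"
  shows QG_module_act_act_inv: "act g (act (inv\<^bsub>G\<^esub> g) x) = x"
    and QG_module_act_inv_act: "act (inv\<^bsub>G\<^esub> g) (act g x) = x"
proof -
  have "inv\<^bsub>G\<^esub> g \<in> carrier G" and "g \<otimes>\<^bsub>G\<^esub> inv\<^bsub>G\<^esub> g = \<one>\<^bsub>G\<^esub>" and "inv\<^bsub>G\<^esub> g \<otimes>\<^bsub>G\<^esub> g = \<one>\<^bsub>G\<^esub>"
    using assms(1,3) by (simp_all add: group.inv_closed group.r_inv group.l_inv)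
  with assms(2,3) show "act g (act (inv\<^bsub>G\<^esub> g) x) = x" and "act (inv\<^bsub>G\<^esub> g) (act g x) = x"
    unfolding QG_module_def by (metis comp_apply id_apply)+
qed

locale QG_module_pair =
  fixes G :: "'g monoid"
    and sA :: "rat \<Rightarrow> 'a::ab_group_add \<Rightarrow> 'a" and actA :: "'g \<Rightarrow> 'a \<Rightarrow> 'a"
    and sB :: "rat \<Rightarrow> 'b::ab_group_add \<Rightarrow> 'b" and actB :: "'g \<Rightarrow> 'b \<Rightarrow> 'b"
  assumes group: "group G"
    and module_A: "QG_module G sA actA" and module_B: "QG_module G sB actB"
begin

lemma vector_space_A: "Vector_Spaces.vector_space sA"
  and vector_space_B: "Vector_Spaces.vector_space sB"
  using module_A module_B unfolding QG_module_def by auto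

sublocale A: vector_space sA by (rule vector_space_A)
sublocale B: vector_space sB by (rule vector_space_B)

lemma linear_act_A: "g \<in> carrier G \<Longrightarrow> Vector_Spaces.linear sA sA (actA g)"
  and linear_act_B: "g \<in> carrier G \<Longrightarrow> Vector_Spaces.linear sB sB (actB g)"
  using module_A module_B unfolding QG_module_def by auto

lemma inv_closed: "g \<in> carrier G \<Longrightarrow> inv\<^bsub>G\<^esub> g \<in> carrier G"
  using group by (rule group.inv_closed)

lemma hom_zero_closed: "hom_zero \<in> hom_carrier sA sB"
  unfolding hom_carrier_def Vector_Spaces.linear_iff hom_zero_def
  using vector_space_A vector_space_B by simp

lemma hom_add_closed:
  "f \<in> hom_carrier sA sB \<Longrightarrow> h \<in> hom_carrier sA sB \<Longrightarrow> hom_add f h \<in> hom_carrier sA sB"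
  unfolding hom_carrier_def Vector_Spaces.linear_iff hom_add_def
  by (simp add: B.scale_right_distrib)

lemma hom_scale_closed: "f \<in> hom_carrier sA sB \<Longrightarrow> hom_scale sB c f \<in> hom_carrier sA sB"
  unfolding hom_carrier_def Vector_Spaces.linear_iff hom_scale_def
  by (simp add: B.scale_right_distrib mult.commute)

lemma hom_act_closed:
  "g \<in> carrier G \<Longrightarrow> f \<in> hom_carrier sA sB \<Longrightarrow> hom_act G actA actB g f \<in> hom_carrier sA sB"
  unfolding hom_carrier_def hom_act_def
  by (metis Vector_Spaces.linear_compose inv_closed linear_act_A linear_act_B mem_Collect_eq)

end

locale filtered_QG_module_pair = QG_module_pair G sA actA sB actB
  for G :: "'g monoid"
    and sA :: "rat \<Rightarrow> 'a::ab_group_add \<Rightarrow> 'a" and actA :: "'g \<Rightarrow> 'a \<Rightarrow> 'a"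
    and sB :: "rat \<Rightarrow> 'b::ab_group_add \<Rightarrow> 'b" and actB :: "'g \<Rightarrow> 'b \<Rightarrow> 'b" +
  fixes \<iota> :: 'g and eA :: rat and FA :: "nat \<Rightarrow> 'a set" and kA :: nat
    and eB :: rat and FB :: "nat \<Rightarrow> 'b set" and kB :: nat
  assumes iota: "\<iota> \<in> carrier G"
    and filtration_A: "scalar_filtration G \<iota> sA actA eA FA kA"
    and filtration_B: "scalar_filtration G \<iota> sB actB eB FB kB"
begin

sublocale FA: scalar_filtration G \<iota> sA actA eA FA kA by (rule filtration_A)
sublocale FB: scalar_filtration G \<iota> sB actB eB FB kB by (rule filtration_B)

lemma act_inv_step_A:
  assumes "eA \<noteq> 0" and "a \<in> FA (Suc i)"
  shows "actA (inv\<^bsub>G\<^esub> \<iota>) a - sA (inverse eA) a \<in> FA i"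
proof -
  define a' where "a' = actA (inv\<^bsub>G\<^esub> \<iota>) a"
  have "a' \<in> FA (Suc i)"
    unfolding a'_def using assms(2) iota by (simp add: FA.act_mem inv_closed)
  moreover have "actA \<iota> a' = a"
    unfolding a'_def using group module_A iota by (rule QG_module_act_act_inv)
  ultimately have "a - sA eA a' \<in> FA i"
    using FA.step by metis
  then have "sA (- inverse eA) (a - sA eA a') \<in> FA i"
    by (rule FA.scale_mem)
  also have "sA (- inverse eA) (a - sA eA a') = a' - sA (inverse eA) a"
    using assms(1) by (simp add: A.scale_right_diff_distrib)
  finally show ?thesis
    unfolding a'_def .
qed

lemma step_truncated_B:
  assumes "m \<in> FB (Suc j - c)"
  shows "actB \<iota> m - sB eB m \<in> FB (j - c)"
proof (cases "c \<le> j")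
  case True
  then have "Suc j - c = Suc (j - c)" by simp
  then show ?thesis using assms FB.step by simp
next
  case False
  then have "m = 0" using assms FB.bottom by simp
  then show ?thesis using linear_map_zero[OF linear_act_B[OF iota]] FB.zero_mem by simp
qed

end

context filtered_QG_module_pair
begin

text \<open>With truncated subtraction, maps of level \<open>n\<close> kill \<open>FA i\<close> whenever \<open>i + n \<le> kA\<close>.\<close>

definition hom_filtration :: "nat \<Rightarrow> ('a \<Rightarrow> 'b) set" where
  "hom_filtration n = {f \<in> hom_carrier sA sB. \<forall>i. \<forall>a\<in>FA i. f a \<in> FB (i + n - kA)}"

lemma hom_filtration_submodule:
  "QG_submodule G (hom_carrier sA sB) hom_add hom_zero (hom_scale sB) (hom_act G actA actB)
     (hom_filtration n)"
  unfolding QG_submodule_def hom_filtration_def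
  using hom_zero_closed hom_add_closed hom_scale_closed hom_act_closed
  by (auto simp: hom_zero_def hom_add_def hom_scale_def hom_act_def inv_closed
      FB.zero_mem FB.add_mem FB.scale_mem FA.act_mem FB.act_mem)

lemma hom_filtration_bottom: "hom_filtration 0 = {hom_zero}"
proof -
  have "f = hom_zero" if "f \<in> hom_filtration 0" for f
  proof
    fix a
    have "f a \<in> FB (kA + 0 - kA)"
      using that FA.top[of kA] unfolding hom_filtration_def by blast
    then show "f a = hom_zero a"
      using FB.bottom by (simp add: hom_zero_def)
  qed
  moreover have "hom_zero \<in> hom_filtration 0"
    using hom_filtration_submodule unfolding QG_submodule_def by blast
  ultimately show ?thesis by blast
qed

lemma hom_filtration_top: "hom_filtration (kA + kB) = hom_carrier sA sB"
  unfolding hom_filtration_def using FB.top by auto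

lemma hom_filtration_Suc: "hom_filtration n \<subseteq> hom_filtration (Suc n)"
proof -
  have "FB (i + n - kA) \<subseteq> FB (i + Suc n - kA)" for i
    by (rule FB.mono) simp
  then show ?thesis
    unfolding hom_filtration_def by blast
qed

lemma hom_filtration_step:
  assumes "eA \<noteq> 0" and f: "f \<in> hom_filtration (Suc n)"
  shows "hom_add (hom_act G actA actB \<iota> f) (hom_scale sB (- (eB / eA)) f) \<in> hom_filtration n"
proof -
  let ?g = "hom_add (hom_act G actA actB \<iota> f) (hom_scale sB (- (eB / eA)) f)"
  have lin_f: "Vector_Spaces.linear sA sB f"
    and f_mem: "\<And>a i. a \<in> FA i \<Longrightarrow> f a \<in> FB (i + Suc n - kA)"
    using f unfolding hom_filtration_def hom_carrier_def by auto
  have g_hom: "?g \<in> hom_carrier sA sB"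
    using f iota unfolding hom_filtration_def
    by (simp add: hom_add_closed hom_scale_closed hom_act_closed)
  have "?g a \<in> FB (i + n - kA)" if a: "a \<in> FA i" for a i
  proof (cases i)
    case 0
    then have "a = 0" using a FA.bottom by simp
    moreover have "?g 0 = 0"
      using g_hom unfolding hom_carrier_def by (simp add: linear_map_zero)
    ultimately show ?thesis
      using FB.zero_mem by simp
  next
    case (Suc i')
    define d where "d = actA (inv\<^bsub>G\<^esub> \<iota>) a - sA (inverse eA) a"
    have "d \<in> FA i'"
      unfolding d_def using act_inv_step_A assms(1) a Suc by blast
    then have fd: "f d \<in> FB (i + n - kA)"
      using f_mem Suc by fastforce
    have fa: "actB \<iota> (f a) - sB eB (f a) \<in> FB (i + n - kA)"
      using step_truncated_B f_mem[OF a] by simp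
    have "?g a = actB \<iota> (f (sA (inverse eA) a + d)) + sB (- (eB / eA)) (f a)"
      by (simp add: hom_add_def hom_act_def hom_scale_def d_def)
    also have "\<dots> = sB (inverse eA) (actB \<iota> (f a) - sB eB (f a)) + actB \<iota> (f d)"
      using linear_act_B[OF iota] lin_f
      by (simp add: linear_map_add linear_map_scale B.scale_right_diff_distrib divide_inverse
          mult.commute)
    finally show ?thesis
      using fa fd iota by (simp add: FB.add_mem FB.scale_mem FB.act_mem)
  qed
  with g_hom show ?thesis
    unfolding hom_filtration_def by blast
qed

lemma gr_scalar_hom:
  assumes "eA \<noteq> 0"
  shows "gr_scalar G \<iota> (hom_carrier sA sB) hom_add hom_zero (hom_scale sB) (hom_act G actA actB)
    (eB / eA)"
  using hom_filtration_submodule hom_filtration_bottom hom_filtration_top hom_filtration_Suc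
    hom_filtration_step[OF assms] by (rule gr_scalarI)

end

interpretation FS: vector_space "fscale :: rat \<Rightarrow> ('x \<Rightarrow> rat) \<Rightarrow> ('x \<Rightarrow> rat)"
  by unfold_locales (simp_all add: fscale_def fun_eq_iff algebra_simps)

lemma free_space_subspace: "FS.subspace free_space"
proof (rule FS.subspaceI)
  fix x y :: "'a \<times> 'b \<Rightarrow> rat" and c
  assume x: "x \<in> free_space" and y: "y \<in> free_space"
  have "{p. (x + y) p \<noteq> 0} \<subseteq> {p. x p \<noteq> 0} \<union> {p. y p \<noteq> 0}"
    and "{p. fscale c x p \<noteq> 0} \<subseteq> {p. x p \<noteq> 0}"
    by (auto simp: fscale_def)
  with x y show "x + y \<in> free_space" and "fscale c x \<in> free_space"
    unfolding free_space_def by (auto intro: finite_subset)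
qed (simp add: free_space_def)

lemma fdelta_in_free_space: "fdelta p \<in> free_space"
proof -
  have "{q. fdelta p q \<noteq> 0} = {p}" by (auto simp: fdelta_def)
  then show ?thesis unfolding free_space_def by simp
qed

lemma free_space_subset_span_fdelta: "free_space \<subseteq> FS.span (range fdelta)"
proof
  fix f :: "'a \<times> 'b \<Rightarrow> rat"
  assume "f \<in> free_space"
  then have fin: "finite {p. f p \<noteq> 0}" unfolding free_space_def by simp
  have "f = (\<Sum>p | f p \<noteq> 0. fscale (f p) (fdelta p))"
  proof
    fix q
    have "(\<Sum>p | f p \<noteq> 0. fscale (f p) (fdelta p)) q = (\<Sum>p | f p \<noteq> 0. if p = q then f p else 0)"
      by (induction rule: infinite_finite_induct) (auto simp: fscale_def fdelta_def)
    also have "\<dots> = f q" using fin by simp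
    finally show "f q = (\<Sum>p | f p \<noteq> 0. fscale (f p) (fdelta p)) q" by simp
  qed
  also have "\<dots> \<in> FS.span (range fdelta)"
    by (intro FS.span_sum FS.span_scale FS.span_base) simp
  finally show "f \<in> FS.span (range fdelta)" .
qed

lemma tensor_null_subspace: "FS.subspace (tensor_null sA sB)"
  unfolding tensor_null_def by simp

lemma tensor_rels_in_null:
  "fdelta (a + a', b) - fdelta (a, b) - fdelta (a', b) \<in> tensor_null sA sB"
  "fdelta (a, b + b') - fdelta (a, b) - fdelta (a, b') \<in> tensor_null sA sB"
  "fdelta (sA c a, b) - fscale c (fdelta (a, b)) \<in> tensor_null sA sB"
  "fdelta (a, sB c b) - fscale c (fdelta (a, b)) \<in> tensor_null sA sB"
  unfolding tensor_null_def tensor_rels_def by (rule FS.span_base; blast)+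

lemma fdelta_zero_in_null:
  "fdelta (0, b) \<in> tensor_null sA sB" "fdelta (a, 0) \<in> tensor_null sA sB"
  using FS.subspace_neg[OF tensor_null_subspace tensor_rels_in_null(1)[of 0 0 b]]
    FS.subspace_neg[OF tensor_null_subspace tensor_rels_in_null(2)[of a 0 0]]
  by simp_all

lemma fdelta_bilinear_expansion:
  "fdelta (sA c a + a', sB d b + b') - fscale (c * d) (fdelta (a, b))
     - (fscale c (fdelta (a, b')) + fscale d (fdelta (a', b)) + fdelta (a', b'))
   \<in> tensor_null sA sB"
proof -
  let ?X = "sA c a" and ?Y = "sB d b"
  have "fdelta (?X + a', ?Y + b') - fdelta (?X, ?Y + b') - fdelta (a', ?Y + b')
      + (fdelta (?X, ?Y + b') - fdelta (?X, ?Y) - fdelta (?X, b'))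
      + (fdelta (a', ?Y + b') - fdelta (a', ?Y) - fdelta (a', b'))
      + (fdelta (?X, ?Y) - fscale c (fdelta (a, ?Y)))
      + fscale c (fdelta (a, ?Y) - fscale d (fdelta (a, b)))
      + (fdelta (?X, b') - fscale c (fdelta (a, b')))
      + (fdelta (a', ?Y) - fscale d (fdelta (a', b))) \<in> tensor_null sA sB"
    (is "?sum \<in> _")
    using tensor_null_subspace
    by (intro FS.subspace_add FS.subspace_scale tensor_rels_in_null)
  moreover have "?sum = fdelta (?X + a', ?Y + b') - fscale (c * d) (fdelta (a, b))
     - (fscale c (fdelta (a, b')) + fscale d (fdelta (a', b)) + fdelta (a', b'))"
    by (simp add: fun_eq_iff fscale_def algebra_simps)
  ultimately show ?thesis
    by (simp only:)
qed

lemma tensor_class_eq_iff: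
  "tensor_class sA sB f = tensor_class sA sB h \<longleftrightarrow> f - h \<in> tensor_null sA sB"
proof
  assume "tensor_class sA sB f = tensor_class sA sB h"
  moreover have "f \<in> tensor_class sA sB f"
    unfolding tensor_class_def using FS.subspace_0[OF tensor_null_subspace] by simp
  ultimately show "f - h \<in> tensor_null sA sB"
    unfolding tensor_class_def by simp
next
  assume fh: "f - h \<in> tensor_null sA sB"
  have "x - h = (x - f) + (f - h)" and "x - f = (x - h) - (f - h)" for x
    by simp_all
  then have "x - f \<in> tensor_null sA sB \<longleftrightarrow> x - h \<in> tensor_null sA sB" for x
    using fh FS.subspace_add[OF tensor_null_subspace] FS.subspace_diff[OF tensor_null_subspace]
    by metis
  then show "tensor_class sA sB f = tensor_class sA sB h"
    unfolding tensor_class_def by simp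
qed

lemma tensor_rep_class: "tensor_rep (tensor_class sA sB f) - f \<in> tensor_null sA sB"
proof -
  have "f \<in> tensor_class sA sB f"
    unfolding tensor_class_def using FS.subspace_0[OF tensor_null_subspace] by simp
  then have "tensor_rep (tensor_class sA sB f) \<in> tensor_class sA sB f"
    unfolding tensor_rep_def by (rule someI[where P = "\<lambda>x. x \<in> tensor_class sA sB f"])
  then show ?thesis
    unfolding tensor_class_def by simp
qed

lemma tensor_add_class:
  "tensor_add sA sB (tensor_class sA sB f) (tensor_class sA sB h) = tensor_class sA sB (f + h)"
proof -
  have "tensor_rep (tensor_class sA sB f) + tensor_rep (tensor_class sA sB h) - (f + h) =
      (tensor_rep (tensor_class sA sB f) - f) + (tensor_rep (tensor_class sA sB h) - h)"
    by simp
  then show ?thesis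
    unfolding tensor_add_def tensor_class_eq_iff
    by (metis FS.subspace_add tensor_null_subspace tensor_rep_class)
qed

lemma tensor_scale_class:
  "tensor_scale sA sB c (tensor_class sA sB f) = tensor_class sA sB (fscale c f)"
proof -
  have "fscale c (tensor_rep (tensor_class sA sB f)) - fscale c f =
      fscale c (tensor_rep (tensor_class sA sB f) - f)"
    by (simp add: FS.scale_right_diff_distrib)
  then show ?thesis
    unfolding tensor_scale_def tensor_class_eq_iff
    by (metis FS.subspace_scale tensor_null_subspace tensor_rep_class)
qed

lemma linear_free_act: "Vector_Spaces.linear fscale fscale (free_act G actA actB g)"
  unfolding Vector_Spaces.linear_iff
  by (simp add: FS.vector_space_axioms free_act_def fscale_def fun_eq_iff split_def)

context QG_module_pair
begin

lemma free_act_fdelta: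
  "g \<in> carrier G \<Longrightarrow> free_act G actA actB g (fdelta (a, b)) = fdelta (actA g a, actB g b)"
  using QG_module_act_inv[OF group module_A] QG_module_act_inv[OF group module_B]
  unfolding free_act_def fdelta_def fun_eq_iff by auto

lemma free_act_null:
  assumes g: "g \<in> carrier G" and x: "x \<in> tensor_null sA sB"
  shows "free_act G actA actB g x \<in> tensor_null sA sB"
proof -
  have "free_act G actA actB g r \<in> tensor_null sA sB" if "r \<in> tensor_rels sA sB" for r
    using that tensor_rels_in_null linear_act_A[OF g] linear_act_B[OF g]
    unfolding tensor_rels_def
    by (auto simp: linear_map_diff[OF linear_free_act] linear_map_scale[OF linear_free_act]
        free_act_fdelta[OF g] linear_map_add linear_map_scale)
  then have "free_act G actA actB g ` tensor_rels sA sB \<subseteq> tensor_null sA sB"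
    by blast
  then have "FS.span (free_act G actA actB g ` tensor_rels sA sB) \<subseteq> tensor_null sA sB"
    using tensor_null_subspace by (rule FS.span_minimal)
  with x show ?thesis
    unfolding tensor_null_def linear_map_span_image[OF linear_free_act] by blast
qed

lemma tensor_act_class:
  "g \<in> carrier G \<Longrightarrow>
    tensor_act G sA sB actA actB g (tensor_class sA sB f) = tensor_class sA sB (free_act G actA actB g f)"
  unfolding tensor_act_def tensor_class_eq_iff
  by (metis free_act_null linear_map_diff[OF linear_free_act] tensor_rep_class)

end

context filtered_QG_module_pair
begin

definition tensor_generators :: "nat \<Rightarrow> ('a \<times> 'b \<Rightarrow> rat) set" where
  "tensor_generators n = {fdelta (a, b) | a b i j. i + j \<le> n \<and> a \<in> FA i \<and> b \<in> FB j}"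

definition tensor_filtration :: "nat \<Rightarrow> ('a \<times> 'b \<Rightarrow> rat) set set" where
  "tensor_filtration n = tensor_class sA sB ` FS.span (tensor_generators n)"

lemma fdelta_in_tensor_generators:
  "i + j \<le> n \<Longrightarrow> a \<in> FA i \<Longrightarrow> b \<in> FB j \<Longrightarrow> fdelta (a, b) \<in> FS.span (tensor_generators n)"
  unfolding tensor_generators_def by (rule FS.span_base) blast

lemma free_act_span_tensor_generators:
  assumes "g \<in> carrier G" and "x \<in> FS.span (tensor_generators n)"
  shows "free_act G actA actB g x \<in> FS.span (tensor_generators n)"
proof -
  have "free_act G actA actB g ` tensor_generators n \<subseteq> tensor_generators n"
    using assms(1) unfolding tensor_generators_def
    by (force simp: free_act_fdelta FA.act_mem FB.act_mem)
  then have "FS.span (free_act G actA actB g ` tensor_generators n) \<subseteq> FS.span (tensor_generators n)"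
    by (rule FS.span_mono)
  with assms(2) show ?thesis
    unfolding linear_map_span_image[OF linear_free_act] by blast
qed

lemma tensor_filtration_submodule:
  "QG_submodule G (tensor_carrier sA sB) (tensor_add sA sB) (tensor_zero sA sB)
     (tensor_scale sA sB) (tensor_act G sA sB actA actB) (tensor_filtration n)"
proof -
  have "tensor_generators n \<subseteq> free_space"
    unfolding tensor_generators_def using fdelta_in_free_space by blast
  then have "FS.span (tensor_generators n) \<subseteq> free_space"
    using free_space_subspace by (rule FS.span_minimal)
  then show ?thesis
    unfolding QG_submodule_def tensor_filtration_def tensor_carrier_def tensor_zero_def
    by (auto simp: tensor_add_class tensor_scale_class tensor_act_class FS.span_zero FS.span_add
        FS.span_scale free_act_span_tensor_generators)
qed

lemma tensor_filtration_bottom: "tensor_filtration 0 = {tensor_zero sA sB}"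
proof -
  have "tensor_generators 0 \<subseteq> tensor_null sA sB"
    unfolding tensor_generators_def using FA.bottom fdelta_zero_in_null by auto
  then have "FS.span (tensor_generators 0) \<subseteq> tensor_null sA sB"
    using tensor_null_subspace by (rule FS.span_minimal)
  then have "tensor_class sA sB f = tensor_class sA sB 0" if "f \<in> FS.span (tensor_generators 0)" for f
    using that by (auto simp: tensor_class_eq_iff)
  then show ?thesis
    unfolding tensor_filtration_def tensor_zero_def using FS.span_zero by blast
qed

lemma tensor_filtration_top: "tensor_filtration (kA + kB) = tensor_carrier sA sB"
proof
  show "tensor_filtration (kA + kB) \<subseteq> tensor_carrier sA sB"
    using tensor_filtration_submodule unfolding QG_submodule_def by blast
  have "fdelta (a, b) \<in> FS.span (tensor_generators (kA + kB))" for a b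
    using fdelta_in_tensor_generators[of kA kB] FA.top FB.top by simp
  then have "FS.span (range fdelta) \<subseteq> FS.span (tensor_generators (kA + kB))"
    by (intro FS.span_minimal) auto
  then have "free_space \<subseteq> FS.span (tensor_generators (kA + kB))"
    using free_space_subset_span_fdelta by blast
  then show "tensor_carrier sA sB \<subseteq> tensor_filtration (kA + kB)"
    unfolding tensor_carrier_def tensor_filtration_def by (rule image_mono)
qed

lemma tensor_filtration_Suc: "tensor_filtration n \<subseteq> tensor_filtration (Suc n)"
proof -
  have "tensor_generators n \<subseteq> tensor_generators (Suc n)"
    unfolding tensor_generators_def using le_SucI by blast
  then show ?thesis
    unfolding tensor_filtration_def by (intro image_mono FS.span_mono)
qed

definition free_act_minus_scalar :: "('a \<times> 'b \<Rightarrow> rat) \<Rightarrow> ('a \<times> 'b \<Rightarrow> rat)" where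
  "free_act_minus_scalar x = free_act G actA actB \<iota> x + fscale (- (eA * eB)) x"

definition tensor_filtration_preimage :: "nat \<Rightarrow> ('a \<times> 'b \<Rightarrow> rat) set" where
  "tensor_filtration_preimage n =
     {h + y |h y. h \<in> FS.span (tensor_generators n) \<and> y \<in> tensor_null sA sB}"

lemma linear_free_act_minus_scalar: "Vector_Spaces.linear fscale fscale free_act_minus_scalar"
  unfolding free_act_minus_scalar_def Vector_Spaces.linear_iff
  by (simp add: FS.vector_space_axioms linear_map_add[OF linear_free_act]
      linear_map_scale[OF linear_free_act] FS.scale_right_distrib FS.scale_right_diff_distrib
      mult.commute)

lemma tensor_filtration_preimage_subspace: "FS.subspace (tensor_filtration_preimage n)"
  unfolding tensor_filtration_preimage_def
  using FS.subspace_span tensor_null_subspace by (rule FS.subspace_sums)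

lemma tensor_class_in_tensor_filtration:
  assumes "x \<in> tensor_filtration_preimage n"
  shows "tensor_class sA sB x \<in> tensor_filtration n"
proof -
  obtain h y where h: "h \<in> FS.span (tensor_generators n)"
    and "y \<in> tensor_null sA sB" and "x = h + y"
    using assms unfolding tensor_filtration_preimage_def by blast
  then have "tensor_class sA sB x = tensor_class sA sB h"
    by (simp add: tensor_class_eq_iff)
  with h show ?thesis
    unfolding tensor_filtration_def by simp
qed

lemma free_act_minus_scalar_fdelta:
  assumes "a \<in> FA (Suc i)" and "b \<in> FB (Suc j)"
  shows "free_act_minus_scalar (fdelta (a, b)) \<in> tensor_filtration_preimage (Suc (i + j))"
proof -
  define a' where "a' = actA \<iota> a - sA eA a"
  define b' where "b' = actB \<iota> b - sB eB b"
  have a': "a' \<in> FA i" and b': "b' \<in> FB j"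
    unfolding a'_def b'_def using assms by (simp_all add: FA.step FB.step)
  define h where "h = fscale eA (fdelta (a, b')) + fscale eB (fdelta (a', b)) + fdelta (a', b')"
  have "h \<in> FS.span (tensor_generators (Suc (i + j)))"
    unfolding h_def using assms a' b'
    by (intro FS.span_add FS.span_scale fdelta_in_tensor_generators) auto
  moreover have "free_act_minus_scalar (fdelta (a, b)) =
      fdelta (sA eA a + a', sB eB b + b') - fscale (eA * eB) (fdelta (a, b))"
    unfolding free_act_minus_scalar_def a'_def b'_def free_act_fdelta[OF iota]
    by (simp add: fscale_def fun_eq_iff)
  then have "free_act_minus_scalar (fdelta (a, b)) - h \<in> tensor_null sA sB"
    unfolding h_def using fdelta_bilinear_expansion by simp
  moreover have "free_act_minus_scalar (fdelta (a, b)) = h + (free_act_minus_scalar (fdelta (a, b)) - h)"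
    by simp
  ultimately show ?thesis
    unfolding tensor_filtration_preimage_def by blast
qed

lemma free_act_minus_scalar_generator:
  assumes "d \<in> tensor_generators (Suc n)"
  shows "free_act_minus_scalar d \<in> tensor_filtration_preimage n"
proof -
  obtain a b i j where d: "d = fdelta (a, b)" "i + j \<le> Suc n" "a \<in> FA i" "b \<in> FB j"
    using assms unfolding tensor_generators_def by blast
  consider "i + j \<le> n" | "i = 0 \<or> j = 0" | i' j' where "i = Suc i'" "j = Suc j'" "i + j = Suc n"
    using d(2) by (cases i; cases j) (auto simp: le_Suc_eq)
  then show ?thesis
  proof cases
    case 1
    then have "d \<in> FS.span (tensor_generators n)"
      using d fdelta_in_tensor_generators by simp
    then have "free_act_minus_scalar d \<in> FS.span (tensor_generators n)"
      unfolding free_act_minus_scalar_def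
      by (intro FS.span_add FS.span_scale free_act_span_tensor_generators iota)
    moreover have "free_act_minus_scalar d = free_act_minus_scalar d + 0"
      by simp
    ultimately show ?thesis
      unfolding tensor_filtration_preimage_def using FS.subspace_0[OF tensor_null_subspace] by blast
  next
    case 2
    then have "d \<in> tensor_null sA sB"
      using d FA.bottom FB.bottom fdelta_zero_in_null by auto
    then have "free_act_minus_scalar d \<in> tensor_null sA sB"
      unfolding free_act_minus_scalar_def using iota tensor_null_subspace
      by (intro FS.subspace_add FS.subspace_scale free_act_null)
    moreover have "free_act_minus_scalar d = 0 + free_act_minus_scalar d"
      by simp
    ultimately show ?thesis
      unfolding tensor_filtration_preimage_def using FS.span_zero by blast
  next
    case 3
    then show ?thesis
      using free_act_minus_scalar_fdelta[of a i' b j'] d by simp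
  qed
qed

lemma tensor_filtration_step:
  assumes "U \<in> tensor_filtration (Suc n)"
  shows "tensor_add sA sB (tensor_act G sA sB actA actB \<iota> U) (tensor_scale sA sB (- (eA * eB)) U)
    \<in> tensor_filtration n"
proof -
  obtain f where f: "f \<in> FS.span (tensor_generators (Suc n))" and U: "U = tensor_class sA sB f"
    using assms unfolding tensor_filtration_def by blast
  have "FS.span (free_act_minus_scalar ` tensor_generators (Suc n)) \<subseteq> tensor_filtration_preimage n"
    using free_act_minus_scalar_generator tensor_filtration_preimage_subspace
    by (intro FS.span_minimal) auto
  with f have "free_act_minus_scalar f \<in> tensor_filtration_preimage n"
    unfolding linear_map_span_image[OF linear_free_act_minus_scalar] by blast
  then have "tensor_class sA sB (free_act_minus_scalar f) \<in> tensor_filtration n"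
    by (rule tensor_class_in_tensor_filtration)
  then show ?thesis
    unfolding U free_act_minus_scalar_def tensor_act_class[OF iota] tensor_scale_class
      tensor_add_class .
qed

lemma gr_scalar_tensor:
  "gr_scalar G \<iota> (tensor_carrier sA sB) (tensor_add sA sB) (tensor_zero sA sB)
     (tensor_scale sA sB) (tensor_act G sA sB actA actB) (eA * eB)"
  using tensor_filtration_submodule tensor_filtration_bottom tensor_filtration_top
    tensor_filtration_Suc tensor_filtration_step by (rule gr_scalarI)

end

lemma (in QG_module_pair) gr_scalar_tensor_hom:
  assumes "\<iota> \<in> carrier G" and "eA \<noteq> 0"
    and "gr_scalar G \<iota> UNIV (+) 0 sA actA eA" and "gr_scalar G \<iota> UNIV (+) 0 sB actB eB"
  shows "gr_scalar G \<iota> (tensor_carrier sA sB) (tensor_add sA sB) (tensor_zero sA sB)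
           (tensor_scale sA sB) (tensor_act G sA sB actA actB) (eA * eB)"
    and "gr_scalar G \<iota> (hom_carrier sA sB) hom_add hom_zero (hom_scale sB) (hom_act G actA actB)
           (eB / eA)"
proof -
  obtain FA kA where "scalar_filtration G \<iota> sA actA eA FA kA"
    using vector_space_A assms(3) by (rule scalar_filtration_exists)
  moreover obtain FB kB where "scalar_filtration G \<iota> sB actB eB FB kB"
    using vector_space_B assms(4) by (rule scalar_filtration_exists)
  ultimately interpret filtered_QG_module_pair G sA actA sB actB \<iota> eA FA kA eB FB kB
    using QG_module_pair_axioms assms(1)
    by (simp add: filtered_QG_module_pair_def filtered_QG_module_pair_axioms_def)
  show "gr_scalar G \<iota> (tensor_carrier sA sB) (tensor_add sA sB) (tensor_zero sA sB)
           (tensor_scale sA sB) (tensor_act G sA sB actA actB) (eA * eB)"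
    by (rule gr_scalar_tensor)
  show "gr_scalar G \<iota> (hom_carrier sA sB) hom_add hom_zero (hom_scale sB) (hom_act G actA actB)
           (eB / eA)"
    using assms(2) by (rule gr_scalar_hom)
qed

theorem proposition3p4p4:
  fixes G :: "'g monoid" and \<iota> :: 'g and L :: "'g set"
    and sA :: "rat \<Rightarrow> 'a::ab_group_add \<Rightarrow> 'a" and actA :: "'g \<Rightarrow> 'a \<Rightarrow> 'a"
    and sB :: "rat \<Rightarrow> 'b::ab_group_add \<Rightarrow> 'b" and actB :: "'g \<Rightarrow> 'b \<Rightarrow> 'b"
  assumes "group G" and "\<iota> \<in> carrier G"
    and "L \<lhd> G" and "finite L"
    and "\<forall>x\<in>carrier (G Mod L). (L #>\<^bsub>G\<^esub> \<iota>) \<otimes>\<^bsub>G Mod L\<^esub> x = x \<otimes>\<^bsub>G Mod L\<^esub> (L #>\<^bsub>G\<^esub> \<iota>)"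
    and "QG_module G sA actA" and "QG_module G sB actB"
  shows
   "(gr_odd G \<iota> UNIV (+) 0 sA actA \<longrightarrow>
      (gr_odd G \<iota> UNIV (+) 0 sB actB \<longrightarrow>
         gr_even G \<iota> (tensor_carrier sA sB) (tensor_add sA sB) (tensor_zero sA sB)
                   (tensor_scale sA sB) (tensor_act G sA sB actA actB) \<and>
         gr_even G \<iota> (hom_carrier sA sB) hom_add hom_zero (hom_scale sB) (hom_act G actA actB)) \<and>
      (gr_even G \<iota> UNIV (+) 0 sB actB \<longrightarrow>
         gr_odd G \<iota> (tensor_carrier sA sB) (tensor_add sA sB) (tensor_zero sA sB)
                   (tensor_scale sA sB) (tensor_act G sA sB actA actB) \<and>
         gr_odd G \<iota> (hom_carrier sA sB) hom_add hom_zero (hom_scale sB) (hom_act G actA actB))) \<and>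
    (gr_even G \<iota> UNIV (+) 0 sA actA \<longrightarrow>
      (gr_odd G \<iota> UNIV (+) 0 sB actB \<longrightarrow>
         gr_odd G \<iota> (tensor_carrier sA sB) (tensor_add sA sB) (tensor_zero sA sB)
                   (tensor_scale sA sB) (tensor_act G sA sB actA actB) \<and>
         gr_odd G \<iota> (hom_carrier sA sB) hom_add hom_zero (hom_scale sB) (hom_act G actA actB)) \<and>
      (gr_even G \<iota> UNIV (+) 0 sB actB \<longrightarrow>
         gr_even G \<iota> (tensor_carrier sA sB) (tensor_add sA sB) (tensor_zero sA sB)
                   (tensor_scale sA sB) (tensor_act G sA sB actA actB) \<and>
         gr_even G \<iota> (hom_carrier sA sB) hom_add hom_zero (hom_scale sB) (hom_act G actA actB)))"
proof -
  interpret QG_module_pair G sA actA sB actB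
    using assms(1,6,7) by (rule QG_module_pair.intro)
  have tensor_scale_one: "tensor_scale sA sB 1 U = U" if "U \<in> tensor_carrier sA sB" for U
    using that unfolding tensor_carrier_def by (auto simp: tensor_scale_class)
  show ?thesis
    using gr_scalar_tensor_hom[OF assms(2), of "-1" "-1"] gr_scalar_tensor_hom[OF assms(2), of "-1" 1]
      gr_scalar_tensor_hom[OF assms(2), of 1 "-1"] gr_scalar_tensor_hom[OF assms(2), of 1 1]
    by (simp add: gr_even_eq_gr_scalar gr_odd_eq_gr_scalar tensor_scale_one hom_scale_def)
qed

end
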